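(* Let $\mu$ be a finite positive measure on $(\Omega,\mathcal B)$ with atoms $A_1,A_2,\dots$ arranged so that $\mu(A_i)\ge\mu(A_{i+1})$. Let $X=\operatorname{sp}\{1_A-1_B:A,B\in\mathcal B,\ \mu(A)=\mu(B)\}$ and let $X_1$ be the norm closure of $X$ in $L_1(\mu)$. Suppose there is a constant $K$ such that for all $i,m\in\mathbb N$ there exists $h\in X_1$ with $\operatorname{supp}(h-1_{A_i})\subset\Omega\setminus\bigcup_{j\le m}A_j$ and $\|h\|_1\le K\mu(A_i)$. If $F\in L_\infty(\mu)$ satisfies $\int hF\,d\mu=0$ for all $h\in X_1$, and $\lim_{n\to\infty}F(A_n)$ exists, then $F$ is ($\mu$-a.e.) constant.
   Context: An atom of $\mu$ is a set $A$ with $\mu(A)>0$ such that each measurable subset of $A$ has measure $0$ or $\mu(A)$. For a measurable function $F$ and an atom $A$, $F(A)$ denotes the ($\mu$-a.e.) constant value of $F$ on $A$. $\operatorname{sp}$ denotes linear span. *)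

theory Defs
  imports "HOL-Probability.Probability"
begin

definition atom :: "'a measure \<Rightarrow> 'a set \<Rightarrow> bool" where
  "atom M A \<longleftrightarrow> A \<in> sets M \<and> measure M A > 0 \<and>
     (\<forall>B\<in>sets M. B \<subseteq> A \<longrightarrow> measure M B = 0 \<or> measure M B = measure M A)"

definition atom_value :: "'a measure \<Rightarrow> ('a \<Rightarrow> real) \<Rightarrow> 'a set \<Rightarrow> real" where
  "atom_value M F A = (THE c. AE x in M. x \<in> A \<longrightarrow> F x = c)"

definition eq_measure_span :: "'a measure \<Rightarrow> ('a \<Rightarrow> real) set" where
  "eq_measure_span M = {g. \<exists>(n::nat) c A B.
      (\<forall>k<n. A k \<in> sets M \<and> B k \<in> sets M \<and> measure M (A k) = measure M (B k)) \<and>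
      g = (\<lambda>x. \<Sum>k<n. c k * (indicator (A k) x - indicator (B k) x))}"

definition L1_closure :: "'a measure \<Rightarrow> ('a \<Rightarrow> real) set \<Rightarrow> ('a \<Rightarrow> real) set" where
  "L1_closure M S = {h. integrable M h \<and>
      (\<forall>e>0. \<exists>g\<in>S. integrable M g \<and> (\<integral>x. \<bar>h x - g x\<bar> \<partial>M) < e)}"

end

theory Submission
  imports Defs
begin

(*
  Annihilating X_1 forces F to have equal integrals over any two sets of equal measure.
  F is a.e. constant on each atom A_j; let c be the limit of these values F(A_j).
  Off the atoms F = c a.e.: the atoms have summable measures, so mu(A_n) -> 0, and by
  Sierpinski's theorem an atomless set on which F > c + d has subsets of measure mu(A_n)
  for all large n, over which F averages more than the value F(A_n) it must average.
  On an atom A_i, integrating F - c against the element h of X_1 that equals 1_{A_i} on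
  A_0 u ... u A_m gives |F(A_i) - c| mu(A_i) <= K mu(A_i) sup_{j>m} |F(A_j) - c|,
  which tends to 0 as m grows.
*)

lemma indicator_diff_in_eq_measure_span:
  assumes "A \<in> sets M" "B \<in> sets M" "measure M A = measure M B"
  shows "(\<lambda>x. indicator A x - indicator B x :: real) \<in> eq_measure_span M"
  unfolding eq_measure_span_def
  by (intro CollectI exI[of _ 1] exI[of _ "\<lambda>_. 1"] exI[of _ "\<lambda>_. A"] exI[of _ "\<lambda>_. B"])
    (use assms in auto)

lemma mem_L1_closureI:
  assumes "g \<in> S" "integrable M g"
  shows "g \<in> L1_closure M S"
  using assms unfolding L1_closure_def by force

lemma L1_closure_integral_zero:
  assumes S: "\<And>g. g \<in> S \<Longrightarrow> integrable M g \<Longrightarrow> integral\<^sup>L M g = 0"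
    and h: "h \<in> L1_closure M S"
  shows "integral\<^sup>L M h = 0"
proof -
  have h_int: "integrable M h" using h unfolding L1_closure_def by blast
  have "\<bar>integral\<^sup>L M h\<bar> < e" if "e > 0" for e
  proof -
    obtain g where g: "g \<in> S" "integrable M g" "(\<integral>x. \<bar>h x - g x\<bar> \<partial>M) < e"
      using h \<open>e > 0\<close> unfolding L1_closure_def by blast
    have "integral\<^sup>L M h = (\<integral>x. h x - g x \<partial>M)"
      using S[OF g(1,2)] h_int g(2) by simp
    also have "\<bar>\<dots>\<bar> \<le> (\<integral>x. \<bar>h x - g x\<bar> \<partial>M)"
      using integral_norm_bound[of M "\<lambda>x. h x - g x"] by simp
    finally show ?thesis using g(3) by linarith
  qed
  from this[of "\<bar>integral\<^sup>L M h\<bar>"] show ?thesis by fastforce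
qed

lemma integrable_indicator_mult:
  fixes F :: "'a \<Rightarrow> real"
  shows "S \<in> sets M \<Longrightarrow> integrable M F \<Longrightarrow> integrable M (\<lambda>x. indicator S x * F x)"
  using integrable_mult_indicator[of S M F] by simp

lemma measure_pos_not_AE_notin:
  assumes "0 < measure M A" "A \<in> sets M"
  shows "\<not> (AE x in M. x \<notin> A)"
  using assms by (auto simp: AE_iff_null_sets[symmetric] measure_def)

lemma atom_value_eqI:
  assumes "atom M A" "AE x in M. x \<in> A \<longrightarrow> F x = c"
  shows "atom_value M F A = c"
  unfolding atom_value_def
proof (rule the_equality)
  fix d assume "AE x in M. x \<in> A \<longrightarrow> F x = d"
  with assms(2) have "d \<noteq> c \<Longrightarrow> AE x in M. x \<notin> A" by eventually_elim auto
  with assms(1) show "d = c" using measure_pos_not_AE_notin by (auto simp: atom_def)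
qed (fact assms(2))

lemma not_atom_outside_atoms:
  assumes all_atoms: "\<And>B. atom M B \<Longrightarrow> \<exists>i. measure M (B - A i) = 0 \<and> measure M (A i - B) = 0"
    and B: "B \<subseteq> space M - (\<Union>i. A i)"
  shows "\<not> atom M B"
proof
  assume "atom M B"
  then obtain i where "measure M (B - A i) = 0" "0 < measure M B"
    using all_atoms by (auto simp: atom_def)
  moreover have "B - A i = B" using B by blast
  ultimately show False by simp
qed

lemma integrable_mult_bounded:
  fixes h F :: "'a \<Rightarrow> real"
  assumes "integrable M h" "F \<in> borel_measurable M" "AE x in M. \<bar>F x\<bar> \<le> C"
  shows "integrable M (\<lambda>x. h x * F x)"
proof (rule Bochner_Integration.integrable_bound[where f = "\<lambda>x. C * h x"])
  show "AE x in M. norm (h x * F x) \<le> norm (C * h x)"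
    using assms(3) by eventually_elim
      (auto simp: abs_mult mult.commute intro: mult_right_mono order_trans[OF _ abs_ge_self])
qed (use assms(1,2) in auto)

lemma AE_near_limit_off_initial_sets:
  fixes F :: "'a \<Rightarrow> real" and A :: "nat \<Rightarrow> 'a set"
  assumes F_sets: "AE x in M. \<forall>j. x \<in> A j \<longrightarrow> F x = v j"
    and F_rest: "AE x in M. x \<notin> (\<Union>j. A j) \<longrightarrow> F x = c"
    and v_near: "\<And>j. m < j \<Longrightarrow> \<bar>v j - c\<bar> \<le> e" and e: "0 \<le> e"
  shows "AE x in M. x \<notin> (\<Union>j\<le>m. A j) \<longrightarrow> \<bar>F x - c\<bar> \<le> e"
  using F_sets F_rest
proof eventually_elim
  case (elim x)
  show ?case
  proof
    assume x_out: "x \<notin> (\<Union>j\<le>m. A j)"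
    show "\<bar>F x - c\<bar> \<le> e"
    proof (cases "x \<in> (\<Union>j. A j)")
      case True
      then obtain j where j: "x \<in> A j" by blast
      with x_out have "m < j" by (auto simp: not_le)
      then show ?thesis using elim j v_near[of j] by auto
    qed (use elim e in auto)
  qed
qed

lemma AE_le_of_null_sets_above:
  fixes F :: "'a \<Rightarrow> real"
  assumes null: "\<And>d. 0 < d \<Longrightarrow> {x \<in> space M. x \<in> S \<and> c + d < F x} \<in> null_sets M"
  shows "AE x in M. x \<in> S \<longrightarrow> F x \<le> c"
proof -
  have "{x \<in> space M. x \<in> S \<and> c < F x} = (\<Union>k. {x \<in> space M. x \<in> S \<and> c + 1 / Suc k < F x})"
  proof (intro equalityI subsetI)
    fix x assume x: "x \<in> {x \<in> space M. x \<in> S \<and> c < F x}"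
    then obtain k where "inverse (real (Suc k)) < F x - c"
      using reals_Archimedean[of "F x - c"] by auto
    with x have "x \<in> {x \<in> space M. x \<in> S \<and> c + 1 / Suc k < F x}"
      by (simp add: inverse_eq_divide)
    then show "x \<in> (\<Union>k. {x \<in> space M. x \<in> S \<and> c + 1 / Suc k < F x})"
      by blast
  qed (auto intro: less_trans[rotated])
  also have "\<dots> \<in> null_sets M"
    using null by (intro null_sets_UN) simp
  finally have "AE x in M. x \<notin> {x \<in> space M. x \<in> S \<and> c < F x}"
    by (rule AE_not_in)
  with AE_space show ?thesis
    by eventually_elim auto
qed

context finite_measure
begin

lemma integral_eq_measure_span:
  assumes "g \<in> eq_measure_span M"
  shows "integral\<^sup>L M g = 0"
proof -
  obtain n :: nat and c A B
    where AB: "\<And>k. k < n \<Longrightarrow> A k \<in> sets M \<and> B k \<in> sets M \<and> measure M (A k) = measure M (B k)"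
    and g: "g = (\<lambda>x. \<Sum>k<n. c k * (indicator (A k) x - indicator (B k) x))"
    using assms unfolding eq_measure_span_def by blast
  have int: "integrable M (\<lambda>x. c k * (indicator (A k) x - indicator (B k) x :: real))"
    if "k < n" for k
    using AB[OF that] by (auto simp: less_top[symmetric])
  have "integral\<^sup>L M g = (\<Sum>k<n. c k * (measure M (A k) - measure M (B k)))"
    unfolding g using int AB
    by (simp add: integral_sum Int_absorb2 sets.sets_into_space less_top[symmetric])
  also have "\<dots> = 0" using AB by simp
  finally show ?thesis .
qed

lemma L1_closure_eq_measure_span_integral:
  "h \<in> L1_closure M (eq_measure_span M) \<Longrightarrow> integral\<^sup>L M h = 0"
  by (rule L1_closure_integral_zero[OF integral_eq_measure_span])

lemma integral_indicator_mult_eq_of_annihilator: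
  fixes F :: "'a \<Rightarrow> real"
  assumes F_int: "integrable M F"
    and annih: "\<And>h. h \<in> L1_closure M (eq_measure_span M) \<Longrightarrow> (\<integral>x. h x * F x \<partial>M) = 0"
    and ST: "S \<in> sets M" "T \<in> sets M" "measure M S = measure M T"
  shows "(\<integral>x. indicator S x * F x \<partial>M) = (\<integral>x. indicator T x * F x \<partial>M)"
proof -
  have ST_closure: "(\<lambda>x. indicator S x - indicator T x) \<in> L1_closure M (eq_measure_span M)"
    using ST by (intro mem_L1_closureI indicator_diff_in_eq_measure_span)
      (auto simp: less_top[symmetric])
  have "0 = (\<integral>x. indicator S x * F x - indicator T x * F x \<partial>M)"
    using annih[OF ST_closure] by (simp add: left_diff_distrib)
  also have "\<dots> = (\<integral>x. indicator S x * F x \<partial>M) - (\<integral>x. indicator T x * F x \<partial>M)"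
    using ST F_int by (intro Bochner_Integration.integral_diff integrable_indicator_mult)
  finally show ?thesis by simp
qed

lemma atom_AE_in_or_AE_notin:
  assumes A: "atom M A" and P: "P \<in> sets M"
  shows "(AE x in M. x \<in> A \<longrightarrow> x \<in> P) \<or> (AE x in M. x \<in> A \<longrightarrow> x \<notin> P)"
proof -
  have A_sets: "A \<in> sets M" using A by (simp add: atom_def)
  have "measure M (A \<inter> P) = 0 \<or> measure M (A \<inter> P) = measure M A"
    using A P by (auto simp: atom_def)
  then have "measure M (A \<inter> P) = 0 \<or> measure M (A - P) = 0"
    using finite_measure_Diff'[OF A_sets P] by auto
  then have "A \<inter> P \<in> null_sets M \<or> A - P \<in> null_sets M"
    using A_sets P by (auto simp: emeasure_eq_measure)
  then have "(AE x in M. x \<notin> A \<inter> P) \<or> (AE x in M. x \<notin> A - P)"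
    using AE_not_in by blast
  then show ?thesis
  proof
    assume "AE x in M. x \<notin> A \<inter> P"
    then have "AE x in M. x \<in> A \<longrightarrow> x \<notin> P" by eventually_elim auto
    then show ?thesis ..
  next
    assume "AE x in M. x \<notin> A - P"
    then have "AE x in M. x \<in> A \<longrightarrow> x \<in> P" by eventually_elim auto
    then show ?thesis ..
  qed
qed

lemma atom_AE_le_average:
  fixes F :: "'a \<Rightarrow> real"
  assumes A: "atom M A" and F_int: "integrable M F"
  shows "AE x in M. x \<in> A \<longrightarrow> F x \<le> (\<integral>x. indicator A x * F x \<partial>M) / measure M A"
    (is "AE x in M. _ \<longrightarrow> F x \<le> ?c")
proof -
  have A_sets: "A \<in> sets M" and A_pos: "0 < measure M A" using A by (auto simp: atom_def)
  have not_above: "\<not> (AE x in M. x \<in> A \<longrightarrow> \<not> F x \<le> ?c)"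
  proof
    assume above: "AE x in M. x \<in> A \<longrightarrow> \<not> F x \<le> ?c"
    have "(\<integral>x. indicator A x * ?c \<partial>M) < (\<integral>x. indicator A x * F x \<partial>M)"
    proof (rule integral_less_AE[where A = A])
      show "AE x in M. x \<in> A \<longrightarrow> indicator A x * ?c \<noteq> indicator A x * F x"
        using above by eventually_elim auto
      show "AE x in M. indicator A x * ?c \<le> indicator A x * F x"
        using above by eventually_elim (auto simp: indicator_def)
    qed (use A_sets A_pos F_int in
      \<open>auto simp: emeasure_eq_measure less_top[symmetric] integrable_indicator_mult\<close>)
    then show False
      using A_sets A_pos by (simp add: Int_absorb2 sets.sets_into_space)
  qed
  have "{x \<in> space M. F x \<le> ?c} \<in> sets M"
    using F_int by measurable
  from atom_AE_in_or_AE_notin[OF A this] show ?thesis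
  proof
    assume "AE x in M. x \<in> A \<longrightarrow> x \<in> {x \<in> space M. F x \<le> ?c}"
    then show ?thesis by eventually_elim auto
  next
    assume "AE x in M. x \<in> A \<longrightarrow> x \<notin> {x \<in> space M. F x \<le> ?c}"
    with AE_space have "AE x in M. x \<in> A \<longrightarrow> \<not> F x \<le> ?c" by eventually_elim auto
    with not_above show ?thesis by contradiction
  qed
qed

lemma atom_AE_eq_average:
  fixes F :: "'a \<Rightarrow> real"
  assumes A: "atom M A" and F_int: "integrable M F"
  shows "AE x in M. x \<in> A \<longrightarrow> F x = (\<integral>x. indicator A x * F x \<partial>M) / measure M A"
  using atom_AE_le_average[OF A F_int] atom_AE_le_average[OF A integrable_minus[OF F_int]]
  by eventually_elim auto

lemma atom_value_eq_average:
  fixes F :: "'a \<Rightarrow> real"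
  assumes "atom M A" "integrable M F"
  shows "atom_value M F A = (\<integral>x. indicator A x * F x \<partial>M) / measure M A"
  by (rule atom_value_eqI[OF assms(1) atom_AE_eq_average[OF assms]])

lemma AE_atom_value:
  fixes F :: "'a \<Rightarrow> real"
  assumes "atom M A" "integrable M F"
  shows "AE x in M. x \<in> A \<longrightarrow> F x = atom_value M F A"
  using atom_AE_eq_average[OF assms] unfolding atom_value_eq_average[OF assms] .

lemma integral_indicator_mult_atom:
  fixes F :: "'a \<Rightarrow> real"
  assumes "atom M A" "integrable M F"
  shows "(\<integral>x. indicator A x * F x \<partial>M) = atom_value M F A * measure M A"
  using assms by (simp add: atom_value_eq_average atom_def)

lemma measure_tendsto_zero_of_almost_disjoint:
  assumes A_sets: "\<And>i. A i \<in> sets M"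
    and disj: "\<And>i j. i \<noteq> j \<Longrightarrow> measure M (A i \<inter> A j) = 0"
  shows "(\<lambda>n. measure M (A n)) \<longlonglongrightarrow> 0"
proof (rule summable_LIMSEQ_zero, rule summableI_nonneg_bounded)
  have "pairwise (\<lambda>i j. AE x in M. x \<notin> A i \<or> x \<notin> A j) I" for I
    unfolding pairwise_def
  proof (intro ballI impI)
    fix i j :: nat assume "i \<noteq> j"
    then have "A i \<inter> A j \<in> null_sets M"
      using A_sets disj by (auto simp: emeasure_eq_measure)
    from AE_not_in[OF this] show "AE x in M. x \<notin> A i \<or> x \<notin> A j"
      by eventually_elim auto
  qed
  then have "(\<Sum>i<n. measure M (A i)) = measure M (\<Union>i<n. A i)" for n
    using A_sets by (intro measure_UNION_AE[symmetric]) (auto simp: fmeasurable_eq_sets)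
  also have "\<dots> n \<le> measure M (space M)" for n
    using A_sets by (intro bounded_measure)
  finally show "(\<Sum>i<n. measure M (A i)) \<le> measure M (space M)" for n .
qed simp

lemma nonatomic_exists_half_subset:
  assumes no_atom: "\<And>B. B \<in> sets M \<Longrightarrow> B \<subseteq> C \<Longrightarrow> \<not> atom M B"
    and C: "C \<in> sets M" "0 < measure M C"
  shows "\<exists>D\<in>sets M. D \<subseteq> C \<and> 0 < measure M D \<and> measure M D \<le> measure M C / 2"
proof -
  obtain D where D: "D \<in> sets M" "D \<subseteq> C" "measure M D \<noteq> 0" "measure M D \<noteq> measure M C"
    using no_atom[OF C(1)] C unfolding atom_def by blast
  have diff: "measure M (C - D) = measure M C - measure M D"
    using finite_measure_Diff[OF C(1) D(1,2)] .
  have "0 < measure M D"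
    using D(3) by (simp add: order_less_le)
  have "measure M D < measure M C"
    using D(4) finite_measure_mono[OF D(2) C(1)] by simp
  then show ?thesis
  proof (cases "measure M D \<le> measure M C / 2")
    case True
    then show ?thesis using D \<open>0 < measure M D\<close> by blast
  next
    case False
    then show ?thesis using D C diff \<open>measure M D < measure M C\<close> by (intro bexI[of _ "C - D"]) auto
  qed
qed

lemma nonatomic_exists_small_subset:
  assumes no_atom: "\<And>B. B \<in> sets M \<Longrightarrow> B \<subseteq> S \<Longrightarrow> \<not> atom M B"
    and S: "S \<in> sets M" "0 < measure M S" and e: "0 < e"
  shows "\<exists>C\<in>sets M. C \<subseteq> S \<and> 0 < measure M C \<and> measure M C < e"
proof -
  have "\<exists>C\<in>sets M. C \<subseteq> S \<and> 0 < measure M C \<and> measure M C \<le> measure M S * (1/2)^k" for k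
  proof (induction k)
    case (Suc k)
    then obtain C where C: "C \<in> sets M" "C \<subseteq> S" "0 < measure M C"
      "measure M C \<le> measure M S * (1/2)^k"
      by blast
    moreover obtain D where "D \<in> sets M" "D \<subseteq> C" "0 < measure M D" "measure M D \<le> measure M C / 2"
      using nonatomic_exists_half_subset[OF _ C(1,3)] no_atom C(2) by blast
    ultimately show ?case by (intro bexI[of _ D]) auto
  qed (use S in auto)
  moreover obtain k where "(1/2::real)^k < e / measure M S"
    using real_arch_pow_inv[of "e / measure M S" "1/2"] e S by auto
  then have "measure M S * (1/2)^k < e"
    using S by (simp add: field_simps)
  ultimately show ?thesis by (meson order.trans not_le)
qed

lemma exists_nearly_maximal_subset:
  assumes "R \<in> sets M" "0 \<le> u"
  shows "\<exists>C\<in>sets M. C \<subseteq> R \<and> measure M C \<le> u \<and>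
    (\<forall>D\<in>sets M. D \<subseteq> R \<longrightarrow> measure M D \<le> u \<longrightarrow> measure M D \<le> 2 * measure M C)"
proof -
  define V where "V = {measure M D | D. D \<in> sets M \<and> D \<subseteq> R \<and> measure M D \<le> u}"
  have V_bdd: "bdd_above V"
    unfolding V_def by (rule bdd_aboveI[of _ u]) blast
  have le_Sup: "measure M D \<le> Sup V" if "D \<in> sets M" "D \<subseteq> R" "measure M D \<le> u" for D
    using that by (intro cSup_upper[OF _ V_bdd]) (auto simp: V_def)
  show ?thesis
  proof (cases "Sup V \<le> 0")
    case True
    then have "measure M D \<le> 2 * measure M {}" if "D \<in> sets M" "D \<subseteq> R" "measure M D \<le> u" for D
      using le_Sup[OF that] by simp
    then show ?thesis using assms(2) by (intro bexI[of _ "{}"]) auto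
  next
    case False
    have "0 \<in> V"
      unfolding V_def using assms(2) by (intro CollectI exI[of _ "{}"]) auto
    then obtain y where "y \<in> V" "Sup V / 2 < y"
      using less_cSup_iff[OF _ V_bdd, of "Sup V / 2"] False by auto
    then obtain C where C: "C \<in> sets M" "C \<subseteq> R" "measure M C \<le> u" "Sup V / 2 < measure M C"
      unfolding V_def by blast
    have "measure M D \<le> 2 * measure M C" if "D \<in> sets M" "D \<subseteq> R" "measure M D \<le> u" for D
      using le_Sup[OF that] C(4) by simp
    with C(1-3) show ?thesis by blast
  qed
qed

(* Greedy exhaustion: each step adds a subset of at least half the largest admissible
   measure, so the added measures tend to 0 and no admissible set of positive measure is left. *)
lemma exists_saturated_subset:
  assumes S: "S \<in> sets M" and t: "0 \<le> t"
  shows "\<exists>L\<in>sets M. L \<subseteq> S \<and> measure M L \<le> t \<and>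
    (\<forall>D\<in>sets M. D \<subseteq> S - L \<longrightarrow> measure M D \<le> t - measure M L \<longrightarrow> measure M D = 0)"
proof -
  define good where "good X C \<longleftrightarrow> C \<in> sets M \<and> C \<subseteq> S - X \<and> measure M C \<le> t - measure M X \<and>
      (\<forall>D\<in>sets M. D \<subseteq> S - X \<longrightarrow> measure M D \<le> t - measure M X \<longrightarrow> measure M D \<le> 2 * measure M C)"
    for X C
  have "\<exists>C. good X C" if "X \<in> sets M" "measure M X \<le> t" for X
    unfolding good_def using exists_nearly_maximal_subset[of "S - X" "t - measure M X"] S that
    by auto
  then obtain step where step: "\<And>X. X \<in> sets M \<Longrightarrow> measure M X \<le> t \<Longrightarrow> good X (step X)"
    by metis
  define B where "B n = ((\<lambda>X. X \<union> step X) ^^ n) {}" for n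
  have B_Suc: "B (Suc n) = B n \<union> step (B n)" for n
    unfolding B_def by simp
  have B: "B n \<in> sets M \<and> B n \<subseteq> S \<and> measure M (B n) \<le> t" for n
  proof (induction n)
    case (Suc n)
    then have "measure M (B (Suc n)) = measure M (B n) + measure M (step (B n))"
      using step[of "B n", unfolded good_def] unfolding B_Suc by (intro finite_measure_Union) auto
    then show ?case using Suc step[of "B n", unfolded good_def] unfolding B_Suc by auto
  qed (use t in \<open>simp add: B_def\<close>)
  define L where "L = (\<Union>n. B n)"
  have L: "L \<in> sets M" "L \<subseteq> S"
    using B by (auto simp: L_def)
  have B_lim: "(\<lambda>n. measure M (B n)) \<longlonglongrightarrow> measure M L"
    unfolding L_def using B
    by (intro finite_Lim_measure_incseq) (auto intro: incseq_SucI simp: B_Suc)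
  have step_lim: "(\<lambda>n. measure M (step (B n))) \<longlonglongrightarrow> 0"
  proof -
    have "(\<lambda>n. measure M (B (Suc n)) - measure M (B n)) \<longlonglongrightarrow> measure M L - measure M L"
      by (intro tendsto_diff B_lim LIMSEQ_Suc[OF B_lim])
    moreover have "measure M (B (Suc n)) - measure M (B n) = measure M (step (B n))" for n
      using B[of n] step[of "B n", unfolded good_def] unfolding B_Suc
      by (subst finite_measure_Union) auto
    ultimately show ?thesis by simp
  qed
  have "measure M D = 0"
    if D: "D \<in> sets M" "D \<subseteq> S - L" "measure M D \<le> t - measure M L" for D
  proof -
    have "measure M D \<le> 2 * measure M (step (B n))" for n
    proof -
      have "B n \<subseteq> L" unfolding L_def by blast
      then have "measure M (B n) \<le> measure M L"
        using L(1) by (rule finite_measure_mono)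
      with D have "D \<subseteq> S - B n" "measure M D \<le> t - measure M (B n)"
        using \<open>B n \<subseteq> L\<close> by auto
      then show ?thesis
        using step[of "B n"] B[of n] D(1) unfolding good_def by blast
    qed
    then have "measure M D \<le> 2 * 0"
      by (intro LIMSEQ_le_const[OF tendsto_mult_left[OF step_lim]]) auto
    then show ?thesis by (simp add: order_antisym)
  qed
  moreover have "measure M L \<le> t"
    using B by (intro LIMSEQ_le_const2[OF B_lim]) auto
  ultimately show ?thesis
    using L by blast
qed

lemma nonatomic_exists_subset_measure_eq:
  assumes no_atom: "\<And>B. B \<in> sets M \<Longrightarrow> B \<subseteq> S \<Longrightarrow> \<not> atom M B"
    and S: "S \<in> sets M" and t: "0 \<le> t" "t \<le> measure M S"
  shows "\<exists>B\<in>sets M. B \<subseteq> S \<and> measure M B = t"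
proof -
  obtain L where L: "L \<in> sets M" "L \<subseteq> S" "measure M L \<le> t"
    and saturated: "\<And>D. D \<in> sets M \<Longrightarrow> D \<subseteq> S - L \<Longrightarrow> measure M D \<le> t - measure M L \<Longrightarrow>
      measure M D = 0"
    using exists_saturated_subset[OF S t(1)] by blast
  have "\<not> measure M L < t"
  proof
    assume "measure M L < t"
    moreover have "measure M (S - L) = measure M S - measure M L"
      using L S by (intro finite_measure_Diff) auto
    ultimately have pos: "0 < measure M (S - L)" and gap: "0 < t - measure M L"
      using t by auto
    have "\<not> atom M X" if "X \<in> sets M" "X \<subseteq> S - L" for X
      using no_atom that by blast
    then obtain D where D: "D \<in> sets M" "D \<subseteq> S - L" "0 < measure M D"
      "measure M D < t - measure M L"
      using nonatomic_exists_small_subset[OF _ _ pos gap] L S by blast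
    with saturated[OF D(1,2)] show False by simp
  qed
  with L show ?thesis by (intro bexI[of _ L]) auto
qed

lemma AE_le_limit_on_nonatomic:
  fixes F :: "'a \<Rightarrow> real"
  assumes no_atom: "\<And>B. B \<in> sets M \<Longrightarrow> B \<subseteq> S \<Longrightarrow> \<not> atom M B" and S: "S \<in> sets M"
    and F_int: "integrable M F"
    and r_pos: "\<And>n. 0 < r n" and r_lim: "r \<longlonglongrightarrow> 0" and v_lim: "v \<longlonglongrightarrow> c"
    and avg: "\<And>n D. D \<in> sets M \<Longrightarrow> measure M D = r n \<Longrightarrow> (\<integral>x. indicator D x * F x \<partial>M) = v n * r n"
  shows "AE x in M. x \<in> S \<longrightarrow> F x \<le> c"
proof -
  define P where "P d = {x \<in> space M. x \<in> S \<and> c + d < F x}" for d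
  have P_sets: "P d \<in> sets M" for d
    unfolding P_def using S F_int by measurable
  have P_null: "P d \<in> null_sets M" if "0 < d" for d
  proof (rule ccontr)
    assume "P d \<notin> null_sets M"
    then have P_pos: "0 < measure M (P d)"
      using P_sets[of d] by (auto simp: emeasure_eq_measure order_less_le)
    have "\<forall>\<^sub>F n in sequentially. r n < measure M (P d) \<and> v n < c + d"
      using order_tendstoD(2)[OF r_lim P_pos] order_tendstoD(2)[OF v_lim, of "c + d"] \<open>0 < d\<close>
      by (auto intro: eventually_conj)
    then obtain n where n: "r n < measure M (P d)" "v n < c + d"
      using eventually_happens'[OF sequentially_bot] by blast
    have no_atom_P: "\<not> atom M X" if "X \<in> sets M" "X \<subseteq> P d" for X
      using no_atom that unfolding P_def by blast
    obtain D where D: "D \<in> sets M" "D \<subseteq> P d" "measure M D = r n"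
      using nonatomic_exists_subset_measure_eq[OF no_atom_P P_sets[of d], of "r n"] r_pos[of n] n(1)
      by auto
    have "(c + d) * r n = (\<integral>x. indicator D x * (c + d) \<partial>M)"
      using D by (simp add: Int_absorb2 sets.sets_into_space)
    also have "\<dots> \<le> (\<integral>x. indicator D x * F x \<partial>M)"
      using D F_int unfolding P_def
      by (intro integral_mono integrable_indicator_mult)
        (auto simp: indicator_def less_top[symmetric])
    also have "\<dots> = v n * r n"
      using avg D by simp
    finally have "(c + d) * r n \<le> v n * r n" .
    with n(2) r_pos[of n] show False by (simp add: mult_le_cancel_right)
  qed
  then show ?thesis
    unfolding P_def by (rule AE_le_of_null_sets_above)
qed

lemma AE_eq_limit_on_nonatomic:
  fixes F :: "'a \<Rightarrow> real"
  assumes no_atom: "\<And>B. B \<in> sets M \<Longrightarrow> B \<subseteq> S \<Longrightarrow> \<not> atom M B" and S: "S \<in> sets M"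
    and F_int: "integrable M F"
    and r_pos: "\<And>n. 0 < r n" and r_lim: "r \<longlonglongrightarrow> 0" and v_lim: "v \<longlonglongrightarrow> c"
    and avg: "\<And>n D. D \<in> sets M \<Longrightarrow> measure M D = r n \<Longrightarrow> (\<integral>x. indicator D x * F x \<partial>M) = v n * r n"
  shows "AE x in M. x \<in> S \<longrightarrow> F x = c"
proof -
  have "AE x in M. x \<in> S \<longrightarrow> - F x \<le> - c"
  proof (rule AE_le_limit_on_nonatomic[OF no_atom S _ r_pos r_lim tendsto_minus[OF v_lim]])
    show "integrable M (\<lambda>x. - F x)"
      using F_int by simp
    show "(\<integral>x. indicator D x * - F x \<partial>M) = - v n * r n"
      if "D \<in> sets M" "measure M D = r n" for n D
      using avg[OF that] by simp
  qed
  moreover have "AE x in M. x \<in> S \<longrightarrow> F x \<le> c"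
    by (rule AE_le_limit_on_nonatomic[OF _ S F_int r_pos r_lim v_lim]) (use no_atom avg in auto)
  ultimately show ?thesis
    by eventually_elim auto
qed

lemma abs_diff_mult_measure_le:
  fixes h F :: "'a \<Rightarrow> real"
  assumes h_int: "integrable M h" and hF_int: "integrable M (\<lambda>x. h x * F x)"
    and h_zero: "integral\<^sup>L M h = 0" and hF_zero: "(\<integral>x. h x * F x \<partial>M) = 0"
    and A: "A \<in> sets M" "A \<subseteq> U"
    and h_U: "AE x in M. x \<in> U \<longrightarrow> h x = indicator A x"
    and F_A: "AE x in M. x \<in> A \<longrightarrow> F x = v"
    and F_out: "AE x in M. x \<notin> U \<longrightarrow> \<bar>F x - c\<bar> \<le> e" and e: "0 \<le> e"
  shows "\<bar>v - c\<bar> * measure M A \<le> e * (\<integral>x. \<bar>h x\<bar> \<partial>M)"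
proof -
  define R where "R x = h x * F x - c * h x - (v - c) * indicator A x" for x
  have A_int: "integrable M (indicator A :: 'a \<Rightarrow> real)"
    using A by (simp add: less_top[symmetric])
  have R_int: "integrable M R"
    unfolding R_def using hF_int h_int A_int by auto
  have R_integral: "integral\<^sup>L M R = - ((v - c) * measure M A)"
    unfolding R_def using hF_int h_int A_int hF_zero h_zero A
    by (simp add: Int_absorb2 sets.sets_into_space)
  have R_le: "AE x in M. \<bar>R x\<bar> \<le> e * \<bar>h x\<bar>"
    using h_U F_A F_out
  proof eventually_elim
    case (elim x)
    show ?case
    proof (cases "x \<in> U")
      case True
      then show ?thesis using elim e by (cases "x \<in> A") (simp_all add: R_def)
    next
      case False
      with A have "x \<notin> A" by blast
      then have "R x = h x * (F x - c)" by (simp add: R_def algebra_simps)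
      then show ?thesis
        using elim False mult_left_mono[of "\<bar>F x - c\<bar>" e "\<bar>h x\<bar>"]
        by (simp add: abs_mult mult.commute)
    qed
  qed
  have "\<bar>integral\<^sup>L M R\<bar> \<le> (\<integral>x. \<bar>R x\<bar> \<partial>M)"
    using integral_norm_bound[of M R] by simp
  also have "\<dots> \<le> (\<integral>x. e * \<bar>h x\<bar> \<partial>M)"
    using R_int h_int R_le by (intro integral_mono_AE) auto
  also have "\<dots> = e * (\<integral>x. \<bar>h x\<bar> \<partial>M)"
    by simp
  finally show ?thesis
    using R_integral by (simp add: abs_mult)
qed

lemma eq_limit_of_annihilating_approximants:
  fixes F :: "'a \<Rightarrow> real" and A :: "nat \<Rightarrow> 'a set"
  assumes A_sets: "A i \<in> sets M" and A_pos: "0 < measure M (A i)"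
    and F_meas: "F \<in> borel_measurable M" and F_le: "AE x in M. \<bar>F x\<bar> \<le> C"
    and F_atoms: "AE x in M. \<forall>j. x \<in> A j \<longrightarrow> F x = v j"
    and F_rest: "AE x in M. x \<notin> (\<Union>j. A j) \<longrightarrow> F x = c"
    and v_lim: "v \<longlonglongrightarrow> c"
    and approx: "\<And>m. \<exists>h. integrable M h \<and> integral\<^sup>L M h = 0 \<and> (\<integral>x. h x * F x \<partial>M) = 0 \<and>
        (AE x in M. x \<in> (\<Union>j\<le>m. A j) \<longrightarrow> h x = indicator (A i) x) \<and> (\<integral>x. \<bar>h x\<bar> \<partial>M) \<le> K"
  shows "v i = c"
proof -
  have bound: "\<bar>v i - c\<bar> * measure M (A i) \<le> e * K" if e: "0 < e" for e
  proof -
    obtain m0 where m0: "\<And>j. m0 \<le> j \<Longrightarrow> \<bar>v j - c\<bar> < e"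
      using LIMSEQ_D[OF v_lim e] by auto
    define m where "m = max i m0"
    obtain h where h_int: "integrable M h" and h_zero: "integral\<^sup>L M h = 0"
      and hF_zero: "(\<integral>x. h x * F x \<partial>M) = 0"
      and h_U: "AE x in M. x \<in> (\<Union>j\<le>m. A j) \<longrightarrow> h x = indicator (A i) x"
      and h_K: "(\<integral>x. \<bar>h x\<bar> \<partial>M) \<le> K"
      using approx[of m] by blast
    have "\<bar>v j - c\<bar> \<le> e" if "m < j" for j
      using m0[of j] that unfolding m_def by simp
    then have F_out: "AE x in M. x \<notin> (\<Union>j\<le>m. A j) \<longrightarrow> \<bar>F x - c\<bar> \<le> e"
      using AE_near_limit_off_initial_sets[OF F_atoms F_rest] e by simp
    have "\<bar>v i - c\<bar> * measure M (A i) \<le> e * (\<integral>x. \<bar>h x\<bar> \<partial>M)"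
    proof (rule abs_diff_mult_measure_le[OF h_int _ h_zero hF_zero A_sets _ h_U _ F_out])
      show "A i \<subseteq> (\<Union>j\<le>m. A j)" unfolding m_def by (intro UN_upper) simp
      show "AE x in M. x \<in> A i \<longrightarrow> F x = v i" using F_atoms by eventually_elim blast
    qed (use e integrable_mult_bounded[OF h_int F_meas F_le] in auto)
    also have "\<dots> \<le> e * K"
      using h_K e by simp
    finally show ?thesis .
  qed
  have "\<bar>v i - c\<bar> * measure M (A i) \<le> 0"
  proof (rule tendsto_le[OF trivial_limit_at_right_real _ tendsto_const])
    show "((\<lambda>e. e * K) \<longlongrightarrow> 0) (at_right 0)"
      by (auto intro!: tendsto_eq_intros)
    show "\<forall>\<^sub>F e in at_right 0. \<bar>v i - c\<bar> * measure M (A i) \<le> e * K"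
      using eventually_at_right_less by (rule eventually_mono) (rule bound)
  qed
  then show ?thesis
    using A_pos by (simp add: mult_le_0_iff)
qed

lemma AE_eq_limit_off_atoms:
  fixes F :: "'a \<Rightarrow> real" and A :: "nat \<Rightarrow> 'a set"
  assumes atoms: "\<And>i. atom M (A i)"
    and distinct: "\<And>i j. i \<noteq> j \<Longrightarrow> measure M (A i \<inter> A j) = 0"
    and all_atoms: "\<And>B. atom M B \<Longrightarrow> \<exists>i. measure M (B - A i) = 0 \<and> measure M (A i - B) = 0"
    and F_int: "integrable M F"
    and F_annih: "\<And>h. h \<in> L1_closure M (eq_measure_span M) \<Longrightarrow> (\<integral>x. h x * F x \<partial>M) = 0"
    and v_lim: "(\<lambda>n. atom_value M F (A n)) \<longlonglongrightarrow> c"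
  shows "AE x in M. x \<notin> (\<Union>j. A j) \<longrightarrow> F x = c"
proof -
  have A_sets: "A i \<in> sets M" and A_pos: "0 < measure M (A i)" for i
    using atoms[of i] by (auto simp: atom_def)
  have "AE x in M. x \<in> space M - (\<Union>j. A j) \<longrightarrow> F x = c"
  proof (rule AE_eq_limit_on_nonatomic[OF _ _ F_int A_pos _ v_lim])
    show "(\<lambda>n. measure M (A n)) \<longlonglongrightarrow> 0"
      using measure_tendsto_zero_of_almost_disjoint[OF A_sets distinct] .
    show "(\<integral>x. indicator D x * F x \<partial>M) = atom_value M F (A n) * measure M (A n)"
      if "D \<in> sets M" "measure M D = measure M (A n)" for n D
      using integral_indicator_mult_eq_of_annihilator[OF F_int F_annih that(1) A_sets that(2)]
        integral_indicator_mult_atom[OF atoms F_int] by simp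
    show "\<not> atom M B" if "B \<subseteq> space M - (\<Union>j. A j)" for B
      by (rule not_atom_outside_atoms[of M A B, OF all_atoms that])
  qed (use A_sets in auto)
  with AE_space show ?thesis
    by eventually_elim auto
qed

lemma atom_value_eq_limit:
  fixes F :: "'a \<Rightarrow> real" and A :: "nat \<Rightarrow> 'a set"
  assumes atoms: "\<And>i. atom M (A i)"
    and K: "\<exists>K::real. \<forall>i m. \<exists>h\<in>L1_closure M (eq_measure_span M).
        (AE x in M. x \<in> (\<Union>j\<le>m. A j) \<longrightarrow> h x = indicator (A i) x) \<and>
        (\<integral>x. \<bar>h x\<bar> \<partial>M) \<le> K * measure M (A i)"
    and F_meas: "F \<in> borel_measurable M" and F_le: "AE x in M. \<bar>F x\<bar> \<le> C"
    and F_annih: "\<And>h. h \<in> L1_closure M (eq_measure_span M) \<Longrightarrow> (\<integral>x. h x * F x \<partial>M) = 0"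
    and F_rest: "AE x in M. x \<notin> (\<Union>j. A j) \<longrightarrow> F x = c"
    and v_lim: "(\<lambda>n. atom_value M F (A n)) \<longlonglongrightarrow> c"
  shows "atom_value M F (A i) = c"
proof -
  have F_int: "integrable M F"
    using F_le F_meas by (intro integrable_const_bound[of F C]) auto
  have F_atoms: "AE x in M. \<forall>j. x \<in> A j \<longrightarrow> F x = atom_value M F (A j)"
    unfolding AE_all_countable using AE_atom_value[OF atoms F_int] by blast
  obtain K' where K': "\<forall>i m. \<exists>h\<in>L1_closure M (eq_measure_span M).
      (AE x in M. x \<in> (\<Union>j\<le>m. A j) \<longrightarrow> h x = indicator (A i) x) \<and>
      (\<integral>x. \<bar>h x\<bar> \<partial>M) \<le> K' * measure M (A i)"
    using K by blast
  show ?thesis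
  proof (rule eq_limit_of_annihilating_approximants[OF _ _ F_meas F_le F_atoms F_rest v_lim])
    show "\<exists>h. integrable M h \<and> integral\<^sup>L M h = 0 \<and> (\<integral>x. h x * F x \<partial>M) = 0 \<and>
        (AE x in M. x \<in> (\<Union>j\<le>m. A j) \<longrightarrow> h x = indicator (A i) x) \<and>
        (\<integral>x. \<bar>h x\<bar> \<partial>M) \<le> K' * measure M (A i)" for m
      using K' F_annih L1_closure_eq_measure_span_integral unfolding L1_closure_def by blast
  qed (use atoms in \<open>auto simp: atom_def\<close>)
qed

end

theorem theorem2p2:
  fixes M :: "'a measure" and A :: "nat \<Rightarrow> 'a set" and F :: "'a \<Rightarrow> real"
  assumes fin: "finite_measure M"
    and atoms: "\<And>i. atom M (A i)"
    and distinct: "\<And>i j. i \<noteq> j \<Longrightarrow> measure M (A i \<inter> A j) = 0"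
    and all_atoms: "\<And>B. atom M B \<Longrightarrow>
        \<exists>i. measure M (B - A i) = 0 \<and> measure M (A i - B) = 0"
    and decr: "\<And>i. measure M (A (Suc i)) \<le> measure M (A i)"
    and K: "\<exists>K::real. \<forall>i m. \<exists>h\<in>L1_closure M (eq_measure_span M).
        (AE x in M. x \<in> (\<Union>j\<le>m. A j) \<longrightarrow> h x = indicator (A i) x) \<and>
        (\<integral>x. \<bar>h x\<bar> \<partial>M) \<le> K * measure M (A i)"
    and F_meas: "F \<in> borel_measurable M"
    and F_bdd: "\<exists>C. AE x in M. \<bar>F x\<bar> \<le> C"
    and F_annih: "\<And>h. h \<in> L1_closure M (eq_measure_span M) \<Longrightarrow> (\<integral>x. h x * F x \<partial>M) = 0"
    and F_lim: "convergent (\<lambda>n. atom_value M F (A n))"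
  shows "\<exists>c. AE x in M. F x = c"
proof -
  interpret finite_measure M by (rule fin)
  obtain C where F_le: "AE x in M. \<bar>F x\<bar> \<le> C"
    using F_bdd by blast
  have F_int: "integrable M F"
    using F_le F_meas by (intro integrable_const_bound[of F C]) auto
  obtain c where v_lim: "(\<lambda>n. atom_value M F (A n)) \<longlonglongrightarrow> c"
    using F_lim unfolding convergent_def by blast
  have F_rest: "AE x in M. x \<notin> (\<Union>j. A j) \<longrightarrow> F x = c"
    by (rule AE_eq_limit_off_atoms[OF atoms distinct all_atoms F_int F_annih v_lim])
  have F_atoms: "AE x in M. \<forall>j. x \<in> A j \<longrightarrow> F x = c"
    unfolding AE_all_countable
    using AE_atom_value[OF atoms F_int]
      atom_value_eq_limit[OF atoms K F_meas F_le F_annih F_rest v_lim]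
    by simp
  from F_atoms F_rest have "AE x in M. F x = c"
    by eventually_elim auto
  then show ?thesis ..
qed

end
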